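(* Let $n\ge 3$ and $x\in S_n$ avoid $123$. Then there exists $1\le i\le n-2$ with $|\mathrm{Act}_i(x;123)|=|\mathrm{Act}_{i+1}(x;123)|\le|\mathrm{Act}_{i+2}(x;123)|$ if and only if $x$ contains the bivincular pattern $132^{\star}$.
   Context: For $w=w_1\cdots w_{m}\in S_{m}$ and $1\le i\le m+1$, let $w^i$ be the permutation obtained by inserting $m+1$ immediately before $w_i$ (at the end if $i=m+1$). For a pattern $y$, site $i$ of $w$ is active with respect to $y$ if $w^i$ avoids $y$ (has no subsequence order-isomorphic to $y$). For $x\in S_n$ and $1\le k\le n$, let $\mathrm{small}_k(x)$ be the subsequence of $x$ formed by the entries $1,\dots,k$ (a permutation in $S_k$). For $1\le j\le n$, $\mathrm{Act}_j(x;y)$ is the set of active sites of $\mathrm{small}_{n+1-j}(x)$ with respect to $y$. (The word $|\mathrm{Act}_1(x;y)|\cdots|\mathrm{Act}_{n-1}(x;y)|$ is West's signature of $x$.) An occurrence of the bivincular pattern $132^{\star}$ in $x$ is a pair of indices $a<b<n$ with $x_a<x_{b+1}$ and $x_b=x_{b+1}+1$. *)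

theory Defs
  imports "HOL-Library.Sublist"
begin

definition is_perm :: "nat \<Rightarrow> nat list \<Rightarrow> bool" where
  "is_perm n x \<longleftrightarrow> length x = n \<and> distinct x \<and> set x = {1..n}"

definition order_iso :: "nat list \<Rightarrow> nat list \<Rightarrow> bool" where
  "order_iso a b \<longleftrightarrow> length a = length b \<and>
     (\<forall>i<length a. \<forall>j<length a. (a ! i < a ! j) \<longleftrightarrow> (b ! i < b ! j))"

definition contains :: "nat list \<Rightarrow> nat list \<Rightarrow> bool" where
  "contains x y \<longleftrightarrow> (\<exists>s. subseq s x \<and> order_iso s y)"

definition avoids :: "nat list \<Rightarrow> nat list \<Rightarrow> bool" where
  "avoids x y \<longleftrightarrow> \<not> contains x y"

text \<open>w^i: insert m+1 (m = length w) immediately before w_i (1-indexed); at the end if i = m+1.\<close>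
definition ins_max :: "nat list \<Rightarrow> nat \<Rightarrow> nat list" where
  "ins_max w i = take (i - 1) w @ [length w + 1] @ drop (i - 1) w"

definition active_sites :: "nat list \<Rightarrow> nat list \<Rightarrow> nat set" where
  "active_sites w y = {i \<in> {1..length w + 1}. avoids (ins_max w i) y}"

definition small :: "nat \<Rightarrow> nat list \<Rightarrow> nat list" where
  "small k x = filter (\<lambda>v. v \<le> k) x"

definition Act :: "nat \<Rightarrow> nat list \<Rightarrow> nat list \<Rightarrow> nat set" where
  "Act j x y = active_sites (small (length x + 1 - j) x) y"

text \<open>Occurrence of the bivincular pattern 132*: 1-indexed a < b < n with
  x_a < x_{b+1} and x_b = x_{b+1} + 1 (here written with 0-based list indices).\<close>
definition contains_132star :: "nat list \<Rightarrow> bool" where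
  "contains_132star x \<longleftrightarrow> (\<exists>a b. a < b \<and> b + 1 < length x \<and>
      x ! a < x ! (b + 1) \<and> x ! b = x ! (b + 1) + 1)"

end

(* If w is a 123-avoiding permutation of [m], inserting m+1 at a site keeps it 123-avoiding
   exactly when the entries before the site decrease; hence |Act_j(x;123)| = 1 + r(small_{n+1-j} x),
   where r(w) is the length of the initial decreasing run of w.
   Passing from small_{k-1} x to small_k x inserts k behind the entries C of small_{k-1} x that
   precede k in x. These decrease, so r grows by one if C is empty and otherwise becomes |C|, which
   is at most its old value. A plateau r_k = r_{k-1} <= r_{k-2} thus forces k and k-1 to be inserted
   behind nonempty prefixes of equal length, so k-1 is the first entry below k after k in x; an entry
   above k in between would complete a 123 with an entry of C. So k is followed directly by k-1 and
   preceded by a smaller entry, an occurrence of 132*. Conversely, an occurrence with x_b = v+1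
   yields a plateau at k = v+1. *)

theory Submission
  imports Defs
begin

section \<open>Avoiding 123\<close>

lemma order_iso_123_iff:
  "order_iso s [1,2,3] \<longleftrightarrow> (\<exists>p q r. s = [p,q,r] \<and> p < q \<and> q < r)"
proof
  assume iso: "order_iso s [1,2,3]"
  then have len: "length s = 3" by (simp add: order_iso_def)
  then have s: "s = [s!0, s!1, s!2]"
    by (intro nth_equalityI) (auto simp: less_Suc_eq numeral_3_eq_3 numeral_2_eq_2 nth_Cons')
  have "s!0 < s!1" "s!1 < s!2"
    using iso len unfolding order_iso_def by (auto dest!: spec[of _ 0] spec[of _ 1] spec[of _ 2])
  with s show "\<exists>p q r. s = [p,q,r] \<and> p < q \<and> q < r" by blast
next
  assume "\<exists>p q r. s = [p,q,r] \<and> p < q \<and> q < r"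
  then show "order_iso s [1,2,3]"
    unfolding order_iso_def by (auto simp: less_Suc_eq numeral_3_eq_3 nth_Cons')
qed

lemma contains_123_iff:
  "contains w [1,2,3] \<longleftrightarrow> (\<exists>p q r. subseq [p,q,r] w \<and> p < q \<and> q < r)"
  unfolding contains_def order_iso_123_iff by blast

lemma avoids_subseq: "avoids w y \<Longrightarrow> subseq v w \<Longrightarrow> avoids v y"
  unfolding avoids_def contains_def using subseq_order.trans by blast

lemma sorted_wrt_subseq: "subseq xs ys \<Longrightarrow> sorted_wrt P ys \<Longrightarrow> sorted_wrt P xs"
proof (induction rule: list_emb.induct)
  case (list_emb_Cons2 x y xs ys)
  then show ?case by (auto elim: list_emb_set)
qed auto

lemma ascent_if_not_decreasing:
  fixes xs :: "'a::linorder list"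
  assumes "distinct xs" and "\<not> sorted_wrt (>) xs"
  shows "\<exists>p q. subseq [p,q] xs \<and> p < q"
  using assms
proof (induction xs)
  case (Cons a xs)
  show ?case
  proof (cases "sorted_wrt (>) xs")
    case True
    with Cons.prems obtain y where y: "y \<in> set xs" "\<not> y < a" by auto
    moreover from y(1) Cons.prems(1) have "y \<noteq> a" by auto
    ultimately have "y \<in> set xs" "a < y" by auto
    then have "subseq [a,y] (a # xs) \<and> a < y" by (simp add: subseq_singleton_left)
    then show ?thesis by blast
  next
    case False
    with Cons obtain p q where "subseq [p,q] xs" "p < q" by auto
    then show ?thesis by (blast intro: list_emb_Cons)
  qed
qed simp

lemma avoids_123_decreasing_before_greater:
  assumes "avoids (C @ c # E) [1,2,3]" and "distinct C" and "\<forall>v\<in>set C. v < c"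
  shows "sorted_wrt (>) C"
proof (rule ccontr)
  assume "\<not> sorted_wrt (>) C"
  then obtain p q where pq: "subseq [p,q] C" "p < q"
    using ascent_if_not_decreasing assms(2) by blast
  then have "subseq ([p,q] @ [c]) (C @ c # E)" by (intro list_emb_append_mono) simp_all
  moreover have "q < c" using pq assms(3) by (auto elim: list_emb_set)
  ultimately have "contains (C @ c # E) [1,2,3]" unfolding contains_123_iff using pq(2) by auto
  with assms(1) show False unfolding avoids_def by simp
qed

lemma avoids_123_insert_greater:
  assumes dec: "sorted_wrt (>) T" and av: "avoids (T @ D) [1,2,3]"
    and less: "\<forall>v\<in>set (T @ D). v < M"
  shows "avoids (T @ M # D) [1,2,3]"
  unfolding avoids_def contains_123_iff
proof clarify
  fix p q r assume sub: "subseq [p,q,r] (T @ M # D)" and "p < q" "q < r"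
  then have inc: "sorted_wrt (<) [p,q,r]" by simp
  obtain xs1 xs2 where split: "[p,q,r] = xs1 @ xs2" "subseq xs1 T" "subseq xs2 (M # D)"
    using sub by (rule subseq_appendE)
  show False
  proof (cases "subseq xs2 D")
    case True
    with split have "subseq [p,q,r] (T @ D)" by (simp add: list_emb_append_mono)
    with av \<open>p < q\<close> \<open>q < r\<close> show False unfolding avoids_def contains_123_iff by blast
  next
    case False
    with split(3) obtain ys where ys: "xs2 = M # ys" "subseq ys D"
      by (cases xs2) (auto split: if_splits)
    have "ys = []"
    proof (rule ccontr)
      assume "ys \<noteq> []"
      then obtain y where "y \<in> set ys" by (metis ex_in_conv set_empty)
      moreover from this ys(2) less have "y < M" by (auto elim: list_emb_set)
      ultimately show False using inc unfolding split(1) ys(1) by (auto simp: sorted_wrt_append)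
    qed
    with split ys have "xs1 = [p,q]" by auto
    with split(2) dec have "sorted_wrt (>) [p,q]" by (blast intro: sorted_wrt_subseq)
    with \<open>p < q\<close> show False by simp
  qed
qed

section \<open>Decreasing runs and active sites\<close>

fun dec_run :: "nat list \<Rightarrow> nat" where
  "dec_run [] = 0"
| "dec_run [a] = 1"
| "dec_run (a # b # xs) = (if b < a then Suc (dec_run (b # xs)) else 1)"

lemma dec_run_le_length: "dec_run w \<le> length w"
  by (induction w rule: dec_run.induct) auto

lemma decreasing_take_iff_le_dec_run:
  "j \<le> length w \<Longrightarrow> sorted_wrt (>) (take j w) \<longleftrightarrow> j \<le> dec_run w"
proof (induction w arbitrary: j rule: dec_run.induct)
  case (2 a)
  then show ?case by (cases j) auto
next
  case (3 a b xs)
  show ?case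
  proof (cases j)
    case (Suc j')
    have "sorted_wrt (>) (a # take j' (b # xs)) \<longleftrightarrow> j' = 0 \<or> b < a \<and> j' \<le> dec_run (b # xs)"
    proof (cases j')
      case (Suc j'')
      have "sorted_wrt (>) (a # b # take j'' xs) \<longleftrightarrow> b < a \<and> sorted_wrt (>) (b # take j'' xs)"
        by (auto dest: in_set_takeD)
      moreover have "sorted_wrt (>) (take j' (b # xs)) \<longleftrightarrow> j' \<le> dec_run (b # xs)" if "b < a"
        using "3.IH"[OF that, of j'] "3.prems" \<open>j = Suc j'\<close> by simp
      ultimately show ?thesis using Suc by auto
    qed simp
    with Suc show ?thesis by (cases j') auto
  qed simp
qed simp

lemma length_le_dec_run_append: "sorted_wrt (>) P \<Longrightarrow> length P \<le> dec_run (P @ Q)"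
  using decreasing_take_iff_le_dec_run[of "length P" "P @ Q"] by simp

lemma dec_run_append_Cons:
  assumes "P \<noteq> []" and "sorted_wrt (>) P" and "last P < c"
  shows "dec_run (P @ c # Q) = length P"
proof -
  have "\<not> sorted_wrt (>) (P @ [c])"
    using assms(1,3) last_in_set by (fastforce simp: sorted_wrt_append)
  then have "\<not> Suc (length P) \<le> dec_run (P @ c # Q)"
    using decreasing_take_iff_le_dec_run[of "Suc (length P)" "P @ c # Q"] by simp
  with length_le_dec_run_append[OF assms(2), of "c # Q"] show ?thesis by simp
qed

lemma dec_run_Cons_greater: "\<forall>v\<in>set B. v < c \<Longrightarrow> dec_run (c # B) = Suc (dec_run B)"
  by (cases B) auto

lemma active_sites_123:
  assumes perm: "is_perm m w" and av: "avoids w [1,2,3]"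
  shows "active_sites w [1,2,3] = {1..dec_run w + 1}"
proof -
  have "avoids (ins_max w i) [1,2,3] \<longleftrightarrow> i \<le> dec_run w + 1"
    if i: "1 \<le> i" "i \<le> length w + 1" for i
  proof -
    define j where "j = i - 1"
    have j: "j \<le> length w" "i = j + 1" using i unfolding j_def by auto
    have ins: "ins_max w i = take j w @ (length w + 1) # drop j w"
      unfolding ins_max_def j_def by simp
    have less: "\<forall>v\<in>set w. v < length w + 1"
      using perm unfolding is_perm_def by auto
    have "avoids (ins_max w i) [1,2,3] \<longleftrightarrow> sorted_wrt (>) (take j w)"
    proof
      assume "avoids (ins_max w i) [1,2,3]"
      then show "sorted_wrt (>) (take j w)"
        unfolding ins
      proof (rule avoids_123_decreasing_before_greater)
        show "distinct (take j w)" using perm by (simp add: is_perm_def)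
        show "\<forall>v\<in>set (take j w). v < length w + 1" using less by (auto dest: in_set_takeD)
      qed
    next
      assume "sorted_wrt (>) (take j w)"
      then show "avoids (ins_max w i) [1,2,3]"
        unfolding ins using av less by (intro avoids_123_insert_greater) auto
    qed
    also have "\<dots> \<longleftrightarrow> j \<le> dec_run w" using decreasing_take_iff_le_dec_run j(1) .
    finally show ?thesis using j(2) by simp
  qed
  moreover have "dec_run w + 1 \<le> length w + 1" using dec_run_le_length by simp
  ultimately show ?thesis unfolding active_sites_def by auto
qed

section \<open>Restricting to the entries 1..k\<close>

lemma small_eq_small_pred:
  assumes "k \<notin> set X"
  shows "small k X = small (k - 1) X"
  unfolding small_def
proof (rule filter_cong[OF refl])
  fix v assume "v \<in> set X"
  with assms have "v \<noteq> k" by blast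
  then show "(v \<le> k) = (v \<le> k - 1)" by linarith
qed

lemma small_split:
  assumes "k \<notin> set X1" and "k \<notin> set X2" and "0 < k"
  shows "small k (X1 @ k # X2) = small (k - 1) X1 @ k # small (k - 1) X2"
    and "small (k - 1) (X1 @ k # X2) = small (k - 1) X1 @ small (k - 1) X2"
proof -
  have "small k (X1 @ k # X2) = small k X1 @ k # small k X2"
    by (simp add: small_def)
  then show "small k (X1 @ k # X2) = small (k - 1) X1 @ k # small (k - 1) X2"
    unfolding small_eq_small_pred[OF assms(1)] small_eq_small_pred[OF assms(2)] .
  show "small (k - 1) (X1 @ k # X2) = small (k - 1) X1 @ small (k - 1) X2"
    using assms(3) by (simp add: small_def)
qed

lemma small_avoids: "avoids x y \<Longrightarrow> avoids (small k x) y"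
  unfolding small_def using avoids_subseq subseq_filter_left by blast

lemma is_perm_small:
  assumes "is_perm n x" and "k \<le> n"
  shows "is_perm k (small k x)"
proof -
  have "distinct (small k x)" "set (small k x) = {1..k}"
    using assms unfolding is_perm_def small_def by auto
  then show ?thesis unfolding is_perm_def using distinct_card by fastforce
qed

lemma card_Act_123:
  assumes "is_perm n x" and "avoids x [1,2,3]" and "1 \<le> j"
  shows "card (Act j x [1,2,3]) = dec_run (small (n + 1 - j) x) + 1"
proof -
  have "is_perm (n + 1 - j) (small (n + 1 - j) x)"
    using assms(1,3) by (simp add: is_perm_small)
  from active_sites_123[OF this small_avoids[OF assms(2)]] assms(1)
  have "Act j x [1,2,3] = {1..dec_run (small (n + 1 - j) x) + 1}"
    unfolding Act_def by (simp add: is_perm_def)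
  then show ?thesis by simp
qed

lemma dec_run_small_step:
  fixes x :: "nat list"
  assumes dist: "distinct x" and av: "avoids x [1,2,3]" and x: "x = X1 @ k # X2" and "0 < k"
  defines "C \<equiv> small (k - 1) X1"
  shows "C = [] \<Longrightarrow> dec_run (small k x) = Suc (dec_run (small (k - 1) x))"
    and "C \<noteq> [] \<Longrightarrow> dec_run (small k x) = length C"
    and "length C \<le> dec_run (small (k - 1) x)"
proof -
  define E where "E = small (k - 1) X2"
  have sk: "small k x = C @ k # E" and sk1: "small (k - 1) x = C @ E"
    using small_split[of k X1 X2] dist \<open>0 < k\<close> unfolding x C_def E_def by auto
  have less: "\<forall>v\<in>set (C @ E). v < k"
    using \<open>0 < k\<close> unfolding C_def E_def small_def by auto
  have "avoids (C @ k # E) [1,2,3]" using small_avoids[OF av, of k] sk by simp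
  then have dec: "sorted_wrt (>) C"
    using less dist unfolding x C_def small_def by (intro avoids_123_decreasing_before_greater) auto
  show "C = [] \<Longrightarrow> dec_run (small k x) = Suc (dec_run (small (k - 1) x))"
    using dec_run_Cons_greater less unfolding sk sk1 by simp
  show "C \<noteq> [] \<Longrightarrow> dec_run (small k x) = length C"
    using dec_run_append_Cons[OF _ dec] last_in_set less unfolding sk by simp
  show "length C \<le> dec_run (small (k - 1) x)"
    using length_le_dec_run_append[OF dec] unfolding sk1 .
qed

section \<open>The bivincular pattern 132*\<close>

lemma contains_132star_iff:
  "contains_132star x \<longleftrightarrow> (\<exists>X1 v X2. x = X1 @ Suc v # v # X2 \<and> (\<exists>a\<in>set X1. a < v))"
proof
  assume "contains_132star x"
  then obtain a b where ab: "a < b" "b + 1 < length x" "x ! a < x ! (b + 1)" "x ! b = Suc (x ! (b + 1))"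
    unfolding contains_132star_def by auto
  have "drop b x = x ! b # x ! (b + 1) # drop (b + 2) x"
    using ab(2) by (simp add: Cons_nth_drop_Suc)
  then have "x = take b x @ Suc (x ! (b + 1)) # x ! (b + 1) # drop (b + 2) x"
    using ab(4) by (metis append_take_drop_id)
  moreover have "x ! a \<in> set (take b x)"
    using ab(1,2) by (auto simp: in_set_conv_nth intro!: exI[of _ a])
  ultimately show "\<exists>X1 v X2. x = X1 @ Suc v # v # X2 \<and> (\<exists>a\<in>set X1. a < v)"
    using ab(3) by blast
next
  assume "\<exists>X1 v X2. x = X1 @ Suc v # v # X2 \<and> (\<exists>a\<in>set X1. a < v)"
  then obtain X1 v X2 i where x: "x = X1 @ Suc v # v # X2" and i: "i < length X1" "X1 ! i < v"
    by (auto simp: in_set_conv_nth)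
  then show "contains_132star x"
    unfolding contains_132star_def
    by (intro exI[of _ i] exI[of _ "length X1"]) (simp add: nth_append)
qed

lemma avoids_123_pred_follows:
  assumes av: "avoids (X1 @ k # X2) [1,2,3]" and "k \<notin> set X2"
    and a: "a \<in> set X1" "a < k" and first: "small (k - 1) X2 = (k - 1) # B"
  shows "\<exists>X2'. X2 = (k - 1) # X2'"
proof (cases X2)
  case Nil
  with first show ?thesis by (simp add: small_def)
next
  case (Cons m X2')
  show ?thesis
  proof (cases "m \<le> k - 1")
    case True
    with first Cons show ?thesis by (simp add: small_def)
  next
    case False
    with \<open>k \<notin> set X2\<close> Cons have "k < m" by auto
    have "subseq [a, k, m] (X1 @ k # X2)"
      using list_emb_append_mono[of "(=)" "[a]" X1 "[k, m]" "k # X2"] a(1) Cons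
      by (simp add: subseq_singleton_left)
    with a(2) \<open>k < m\<close> have "contains (X1 @ k # X2) [1,2,3]"
      unfolding contains_123_iff by blast
    with av show ?thesis unfolding avoids_def by simp
  qed
qed

lemma contains_132star_if_dec_run_plateau:
  assumes perm: "is_perm n x" and av: "avoids x [1,2,3]" and k: "3 \<le> k" "k \<le> n"
    and eq: "dec_run (small k x) = dec_run (small (k - 1) x)"
    and le: "dec_run (small (k - 1) x) \<le> dec_run (small (k - 2) x)"
  shows "contains_132star x"
proof -
  have dist: "distinct x" and set_x: "set x = {1..n}" using perm by (auto simp: is_perm_def)
  have "k \<in> set x" "k - 1 \<in> set x" using set_x k by auto
  then obtain X1 X2 Y1 Y2 where x: "x = X1 @ k # X2" and y: "x = Y1 @ (k - 1) # Y2"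
    by (meson split_list)
  define C where "C = small (k - 1) X1"
  define A where "A = small (k - 2) Y1"
  have "0 < k" "0 < k - 1" using k by auto
  note step_k = dec_run_small_step[OF dist av x \<open>0 < k\<close>, folded C_def]
  note step_pred = dec_run_small_step[OF dist av y \<open>0 < k - 1\<close>,
      unfolded diff_diff_left one_add_one, folded A_def]
  have "C \<noteq> []" using step_k(1) eq k by auto
  have "A \<noteq> []" using step_pred(1) le k by auto
  have "length C = length A"
    using step_k(2)[OF \<open>C \<noteq> []\<close>] step_pred(2)[OF \<open>A \<noteq> []\<close>] eq by simp
  moreover have "C @ small (k - 1) X2 = small (k - 1) x"
    using small_split(2)[of k X1 X2] dist \<open>0 < k\<close> unfolding x C_def by simp
  moreover have "small (k - 1) x = A @ (k - 1) # small (k - 2) Y2"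
    using small_split(1)[of "k - 1" Y1 Y2] dist \<open>0 < k - 1\<close>
    unfolding y A_def diff_diff_left one_add_one by simp
  ultimately have "C = A" and first: "small (k - 1) X2 = (k - 1) # small (k - 2) Y2"
    by auto
  obtain a where "a \<in> set C" using \<open>C \<noteq> []\<close> by (meson ex_in_conv set_empty)
  moreover from this have "a \<in> set A" using \<open>C = A\<close> by simp
  ultimately have a: "a \<in> set X1" "a < k - 1"
    using k unfolding C_def A_def small_def by auto
  have "avoids (X1 @ k # X2) [1,2,3]" "k \<notin> set X2" "a < k" using av dist a(2) x by auto
  then obtain X2' where "X2 = (k - 1) # X2'"
    using avoids_123_pred_follows a(1) first by blast
  with x a k show ?thesis unfolding contains_132star_iff
    by (intro exI[of _ X1] exI[of _ "k - 1"] exI[of _ X2']) auto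
qed

lemma dec_run_plateau_if_contains_132star:
  assumes perm: "is_perm n x" and av: "avoids x [1,2,3]" and "contains_132star x"
  shows "\<exists>k. 3 \<le> k \<and> k \<le> n \<and> dec_run (small k x) = dec_run (small (k - 1) x) \<and>
           dec_run (small (k - 1) x) \<le> dec_run (small (k - 2) x)"
proof -
  obtain X1 v X2 a where x: "x = X1 @ Suc v # v # X2" and a: "a \<in> set X1" "a < v"
    using \<open>contains_132star x\<close> unfolding contains_132star_iff by blast
  have dist: "distinct x" and set_x: "set x = {1..n}" using perm by (auto simp: is_perm_def)
  then have "1 \<le> a" "Suc v \<le> n" "v \<notin> set X1" using a x by auto
  define C where "C = small v X1"
  have "C \<noteq> []" using a unfolding C_def small_def by (force simp: filter_empty_conv)
  have "small (v - 1) (X1 @ [Suc v]) = C"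
    using small_eq_small_pred[OF \<open>v \<notin> set X1\<close>] unfolding C_def by (simp add: small_def)
  then have "dec_run (small v x) = length C" and "length C \<le> dec_run (small (v - 1) x)"
    using dec_run_small_step(2,3)[of x "X1 @ [Suc v]" v X2] dist av \<open>C \<noteq> []\<close> a(2) x by auto
  moreover have "dec_run (small (Suc v) x) = length C"
    using dec_run_small_step(2)[of x X1 "Suc v" "v # X2"] dist av \<open>C \<noteq> []\<close> x
    unfolding C_def by simp
  ultimately show ?thesis using \<open>1 \<le> a\<close> a(2) \<open>Suc v \<le> n\<close>
    by (intro exI[of _ "Suc v"]) auto
qed

lemma ex_reversed_index:
  fixes n :: nat
  shows "(\<exists>i. 1 \<le> i \<and> i \<le> n - 2 \<and> P (n + 1 - i)) \<longleftrightarrow> (\<exists>k. 3 \<le> k \<and> k \<le> n \<and> P k)"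
proof
  assume "\<exists>i. 1 \<le> i \<and> i \<le> n - 2 \<and> P (n + 1 - i)"
  then obtain i where "1 \<le> i" "i \<le> n - 2" "P (n + 1 - i)" by blast
  then show "\<exists>k. 3 \<le> k \<and> k \<le> n \<and> P k" by (intro exI[of _ "n + 1 - i"]) auto
next
  assume "\<exists>k. 3 \<le> k \<and> k \<le> n \<and> P k"
  then obtain k where "3 \<le> k" "k \<le> n" "P k" by blast
  then show "\<exists>i. 1 \<le> i \<and> i \<le> n - 2 \<and> P (n + 1 - i)"
    by (intro exI[of _ "n + 1 - k"]) auto
qed

theorem theorem3p12:
  fixes n :: nat and x :: "nat list"
  assumes "n \<ge> 3" and "is_perm n x" and "avoids x [1,2,3]"
  shows "(\<exists>i. 1 \<le> i \<and> i \<le> n - 2 \<and>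
            card (Act i x [1,2,3]) = card (Act (i+1) x [1,2,3]) \<and>
            card (Act (i+1) x [1,2,3]) \<le> card (Act (i+2) x [1,2,3]))
         \<longleftrightarrow> contains_132star x"
proof -
  let ?r = "\<lambda>k. dec_run (small k x)"
  have card: "(card (Act i x [1,2,3]) = card (Act (i+1) x [1,2,3]) \<and>
      card (Act (i+1) x [1,2,3]) \<le> card (Act (i+2) x [1,2,3])) \<longleftrightarrow>
      (?r (n + 1 - i) = ?r (n + 1 - i - 1) \<and> ?r (n + 1 - i - 1) \<le> ?r (n + 1 - i - 2))"
    if "1 \<le> i" for i
    using card_Act_123[OF assms(2,3), of i] card_Act_123[OF assms(2,3), of "i + 1"]
      card_Act_123[OF assms(2,3), of "i + 2"] that by simp
  have "contains_132star x \<longleftrightarrow>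
      (\<exists>k. 3 \<le> k \<and> k \<le> n \<and> ?r k = ?r (k - 1) \<and> ?r (k - 1) \<le> ?r (k - 2))"
    using contains_132star_if_dec_run_plateau dec_run_plateau_if_contains_132star assms(2,3)
    by blast
  also have "\<dots> \<longleftrightarrow> (\<exists>i. 1 \<le> i \<and> i \<le> n - 2 \<and> ?r (n + 1 - i) = ?r (n + 1 - i - 1) \<and>
      ?r (n + 1 - i - 1) \<le> ?r (n + 1 - i - 2))"
    using ex_reversed_index[of n "\<lambda>k. ?r k = ?r (k - 1) \<and> ?r (k - 1) \<le> ?r (k - 2)"] by simp
  finally show ?thesis using card by blast
qed

end
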